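(* Let $P(z_1,\dots,z_n)=\sum_{S\subseteq[n]}p_S\prod_{i\in S}z_i$ with $p_S\in\mathbb R\setminus\{0\}$ and $p_S=p_{[n]\setminus S}$ for all $S\subseteq[n]$. For each $j$ write $P=A_jz_j+B_j$ with $A_j,B_j$ multilinear in the variables $z_i$, $i\ne j$, and assume that for every $j$, $A_j\ne0$ whenever $|z_i|\ge1$ for all $i\neq j$. Then $P$ has the Lee-Yang property.
   Context: A multilinear polynomial $P(z_1,\dots,z_n)$ has the Lee-Yang property if $P(\lambda_1,\dots,\lambda_n)\neq0$ whenever $|\lambda_i|\ge1$ for all $i$ and $|\lambda_i|>1$ for at least one $i$. *)

theory Defs
  imports Complex_Main
begin

definition mlpoly :: "nat \<Rightarrow> (nat set \<Rightarrow> real) \<Rightarrow> (nat \<Rightarrow> complex) \<Rightarrow> complex" where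
  "mlpoly n p z = (\<Sum>S\<in>Pow {..<n}. complex_of_real (p S) * (\<Prod>i\<in>S. z i))"

definition mlcoeffA :: "nat \<Rightarrow> (nat set \<Rightarrow> real) \<Rightarrow> nat \<Rightarrow> (nat \<Rightarrow> complex) \<Rightarrow> complex" where
  "mlcoeffA n p j z = (\<Sum>S\<in>{S\<in>Pow {..<n}. j \<in> S}. complex_of_real (p S) * (\<Prod>i\<in>S - {j}. z i))"

definition lee_yang :: "nat \<Rightarrow> ((nat \<Rightarrow> complex) \<Rightarrow> complex) \<Rightarrow> bool" where
  "lee_yang n Q \<longleftrightarrow> (\<forall>z. (\<forall>i<n. 1 \<le> norm (z i)) \<and> (\<exists>i<n. 1 < norm (z i)) \<longrightarrow> Q z \<noteq> 0)"

end

theory Submission imports Defs "HOL-Complex_Analysis.Complex_Analysis" begin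

text \<open>Write \<open>P = A\<^sub>j z\<^sub>j + B\<^sub>j\<close> for a variable \<open>z\<^sub>j\<close> with \<open>\<bar>z\<^sub>j\<bar> > 1\<close>; it suffices to show
\<open>\<bar>B\<^sub>j\<bar> \<le> \<bar>A\<^sub>j\<bar>\<close> when all other \<open>\<bar>z\<^sub>i\<bar> \<ge> 1\<close>. On the torus \<open>\<bar>z\<^sub>i\<bar> = 1\<close> the symmetry
\<open>p\<^sub>S = p\<^bsub>[n]\<setminus>S\<^esub>\<close> gives \<open>B\<^sub>j = (\<Prod>z\<^sub>i) \<cdot> conj A\<^sub>j\<close>, so equality holds there. Releasing the
variables from the unit circle one at a time, both sides are affine in the released
variable \<open>z\<^sub>k\<close>, and the inequality propagates from \<open>\<bar>z\<^sub>k\<bar> = 1\<close> to \<open>\<bar>z\<^sub>k\<bar> \<ge> 1\<close> by the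
maximum modulus principle applied to \<open>B\<^sub>j/A\<^sub>j\<close> as a function of \<open>1/z\<^sub>k\<close>. This needs the
coefficient of \<open>z\<^sub>k\<close> in \<open>A\<^sub>j\<close> to be nonzero, which follows from \<open>A\<^sub>j \<noteq> 0\<close> and \<open>p\<^bsub>[n]\<^esub> \<noteq> 0\<close>
by a perturbation argument.\<close>

lemma norm_affine_le_on_exterior:
  fixes a b c d w :: complex
  assumes c0: "c \<noteq> 0"
    and nz: "\<And>w. 1 \<le> norm w \<Longrightarrow> c * w + d \<noteq> 0"
    and circle: "\<And>w. norm w = 1 \<Longrightarrow> norm (a * w + b) \<le> norm (c * w + d)"
    and w: "1 \<le> norm w"
  shows "norm (a * w + b) \<le> norm (c * w + d)"
proof -
  define g where "g u = (a + b * u) / (c + d * u)" for u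
  have g_inverse: "g (inverse v) = (a * v + b) / (c * v + d)" if "v \<noteq> 0" for v
  proof -
    have "a * v + b = (a + b * inverse v) * v" "c * v + d = (c + d * inverse v) * v"
      using that by (simp_all add: field_simps)
    then show ?thesis
      unfolding g_def using that by (simp del: mult_divide_mult_cancel_right)
  qed
  have den: "c + d * u \<noteq> 0" if "norm u \<le> 1" for u
  proof (cases "u = 0")
    case False
    have "1 \<le> norm (inverse u)"
      using that False by (simp add: norm_inverse one_le_inverse_iff)
    then have "c * inverse u + d \<noteq> 0" by (rule nz)
    moreover have "c + d * u = u * (c * inverse u + d)"
      using False by (simp add: field_simps)
    ultimately show ?thesis using False by simp
  qed (use c0 in simp)
  have "norm (g u) \<le> 1" if "u \<in> frontier (cball 0 1)" for u
  proof -
    have u: "norm (inverse u) = 1" "u \<noteq> 0"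
      using that by (auto simp: norm_inverse)
    then have "g u = (a * inverse u + b) / (c * inverse u + d)"
      using g_inverse[of "inverse u"] by simp
    then show ?thesis
      using circle[OF u(1)] nz[of "inverse u"] u by (simp add: norm_divide divide_le_eq_1)
  qed
  moreover have "inverse w \<in> cball 0 1"
    using w by (simp add: norm_inverse inverse_le_1_iff)
  moreover have "g holomorphic_on ball 0 1" "continuous_on (cball 0 1) g"
    unfolding g_def by (intro holomorphic_intros continuous_intros; use den in auto)+
  ultimately have "norm (g (inverse w)) \<le> 1"
    using maximum_modulus_frontier[of g "cball 0 1"] by auto
  moreover have "w \<noteq> 0" "c * w + d \<noteq> 0" using w nz by auto
  ultimately show ?thesis
    by (simp add: g_inverse norm_divide divide_le_eq_1)
qed

definition mlpoly_on :: "nat set \<Rightarrow> (nat set \<Rightarrow> real) \<Rightarrow> (nat \<Rightarrow> complex) \<Rightarrow> complex" where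
  "mlpoly_on V c z = (\<Sum>S\<in>Pow V. complex_of_real (c S) * (\<Prod>i\<in>S. z i))"

lemma mlpoly_eq_mlpoly_on: "mlpoly n p = mlpoly_on {..<n} p"
  by (simp add: fun_eq_iff mlpoly_def mlpoly_on_def)

lemma mlcoeffA_eq_mlpoly_on:
  assumes "j < n"
  shows "mlcoeffA n p j z = mlpoly_on ({..<n} - {j}) (\<lambda>S. p (insert j S)) z"
  unfolding mlcoeffA_def mlpoly_on_def
  by (rule sum.reindex_bij_witness[where i="insert j" and j="\<lambda>S. S - {j}"])
    (use assms in \<open>auto simp: insert_absorb\<close>)

lemma mlpoly_on_empty [simp]: "mlpoly_on {} c z = complex_of_real (c {})"
  by (simp add: mlpoly_on_def)

lemma mlpoly_on_cong: "(\<And>i. i \<in> V \<Longrightarrow> z i = z' i) \<Longrightarrow> mlpoly_on V c z = mlpoly_on V c z'"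
  unfolding mlpoly_on_def by (intro sum.cong refl arg_cong2[where f="(*)"] prod.cong) auto

lemma mlpoly_on_fun_upd [simp]: "k \<notin> V \<Longrightarrow> mlpoly_on V c (z(k := w)) = mlpoly_on V c z"
  by (rule mlpoly_on_cong) auto

lemma mlpoly_on_insert:
  assumes "finite V" "k \<notin> V"
  shows "mlpoly_on (insert k V) c z = z k * mlpoly_on V (\<lambda>S. c (insert k S)) z + mlpoly_on V c z"
proof -
  let ?m = "\<lambda>S. complex_of_real (c S) * (\<Prod>i\<in>S. z i)"
  have inj: "inj_on (insert k) (Pow V)"
    unfolding inj_on_def using assms(2) by (metis PowD insert_ident subsetD)
  have "mlpoly_on (insert k V) c z = sum ?m (Pow V) + sum ?m (insert k ` Pow V)"
    unfolding mlpoly_on_def Pow_insert by (rule sum.union_disjoint) (use assms in auto)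
  also have "sum ?m (insert k ` Pow V) = (\<Sum>S\<in>Pow V. ?m (insert k S))"
    by (simp add: sum.reindex[OF inj])
  also have "\<dots> = (\<Sum>S\<in>Pow V. z k * (complex_of_real (c (insert k S)) * (\<Prod>i\<in>S. z i)))"
  proof (rule sum.cong[OF refl])
    fix S assume "S \<in> Pow V"
    then have "finite S" "k \<notin> S" using assms finite_subset by auto
    then show "?m (insert k S) = z k * (complex_of_real (c (insert k S)) * (\<Prod>i\<in>S. z i))"
      by (simp add: algebra_simps)
  qed
  finally show ?thesis
    by (simp add: mlpoly_on_def sum_distrib_left)
qed

lemma tendsto_mlpoly_on:
  "(\<And>i. (\<lambda>m. X m i) \<longlonglongrightarrow> z i) \<Longrightarrow> (\<lambda>m. mlpoly_on V c (X m)) \<longlonglongrightarrow> mlpoly_on V c z"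
  unfolding mlpoly_on_def by (intro tendsto_intros)

lemma mlpoly_on_nonzero_near:
  assumes "finite V" "c V \<noteq> 0" "\<forall>i\<in>V. z i \<noteq> 0" "0 < \<epsilon>"
  shows "\<exists>t. (\<forall>i. 0 \<le> t i \<and> t i \<le> \<epsilon>) \<and> mlpoly_on V c (\<lambda>i. of_real (1 + t i) * z i) \<noteq> 0"
  using assms
proof (induction V arbitrary: c rule: finite_induct)
  case empty
  then show ?case by (intro exI[of _ "\<lambda>_. 0"]) simp
next
  case (insert m V c)
  let ?y = "\<lambda>t i. complex_of_real (1 + t i) * z i"
  obtain t where t: "\<forall>i. 0 \<le> t i \<and> t i \<le> \<epsilon>"
    and a: "mlpoly_on V (\<lambda>S. c (insert m S)) (?y t) \<noteq> 0"
    using insert.IH[of "\<lambda>S. c (insert m S)"] insert.prems by auto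
  define a where "a = mlpoly_on V (\<lambda>S. c (insert m S)) (?y t)"
  define b where "b = mlpoly_on V c (?y t)"
  have expand: "mlpoly_on (insert m V) c (?y (t(m := \<tau>))) = of_real (1 + \<tau>) * z m * a + b" for \<tau>
  proof -
    have "mlpoly_on V c' (?y (t(m := \<tau>))) = mlpoly_on V c' (?y t)" for c'
      using insert.hyps by (intro mlpoly_on_cong) auto
    then show ?thesis
      by (simp add: mlpoly_on_insert[OF insert.hyps] a_def b_def)
  qed
  text \<open>The affine function \<open>\<tau> \<mapsto> (1 + \<tau>) z\<^sub>m a + b\<close> has at most one root.\<close>
  obtain \<tau> where \<tau>: "\<tau> \<in> {\<epsilon>, \<epsilon>/2}" "of_real (1 + \<tau>) * z m * a + b \<noteq> 0"
  proof (rule ccontr)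
    assume "\<not> thesis"
    then have "of_real (1 + \<epsilon>) * z m * a + b = 0" "of_real (1 + \<epsilon>/2) * z m * a + b = 0"
      using that by blast+
    moreover have "of_real (\<epsilon>/2) * z m * a
        = (of_real (1 + \<epsilon>) * z m * a + b) - (of_real (1 + \<epsilon>/2) * z m * a + b)"
      by (simp add: algebra_simps)
    ultimately have "of_real (\<epsilon>/2) * z m * a = 0" by simp
    then show False using insert.prems a by (simp add: a_def)
  qed
  show ?case
    by (rule exI[of _ "t(m := \<tau>)"]) (use t \<tau> insert.prems(3) expand in auto)
qed

lemma mlpoly_on_nonzero_sequence:
  assumes "finite V" "c V \<noteq> 0" "\<forall>i\<in>V. z i \<noteq> 0"
  obtains X where "\<And>i. (\<lambda>m. X m i) \<longlonglongrightarrow> z i" "\<And>m i. norm (z i) \<le> norm (X m i)"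
    "\<And>m. mlpoly_on V c (X m) \<noteq> 0"
proof -
  have "\<forall>m. \<exists>t. (\<forall>i. 0 \<le> t i \<and> t i \<le> inverse (real (Suc m))) \<and>
      mlpoly_on V c (\<lambda>i. of_real (1 + t i) * z i) \<noteq> 0"
    using assms by (intro allI mlpoly_on_nonzero_near) auto
  then obtain t where t: "\<And>m i. 0 \<le> t m i \<and> t m i \<le> inverse (real (Suc m))"
    and nonzero: "\<And>m. mlpoly_on V c (\<lambda>i. of_real (1 + t m i) * z i) \<noteq> 0"
    by metis
  have "(\<lambda>m. t m i) \<longlonglongrightarrow> 0" for i
    by (rule tendsto_sandwich[where f="\<lambda>_. 0" and h="\<lambda>m. inverse (real (Suc m))"])
      (use t LIMSEQ_inverse_real_of_nat in auto)
  then have "(\<lambda>m. of_real (1 + t m i) * z i) \<longlonglongrightarrow> z i" for i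
    by (auto intro!: tendsto_eq_intros)
  moreover have "norm (z i) \<le> norm (of_real (1 + t m i) * z i)" for m i
    using t[of m i] by (simp add: norm_mult mult_le_cancel_right1 del: of_real_add)
  ultimately show ?thesis
    using nonzero by (intro that[of "\<lambda>m i. of_real (1 + t m i) * z i"])
qed

lemma mlpoly_on_coeff_nonzero_exterior:
  assumes V: "finite V" "k \<notin> V" and top: "c (insert k V) \<noteq> 0"
    and F: "\<And>y. \<forall>i\<in>insert k V. 1 \<le> norm (y i) \<Longrightarrow> mlpoly_on (insert k V) c y \<noteq> 0"
    and z: "\<forall>i\<in>V. 1 \<le> norm (z i)"
  shows "mlpoly_on V (\<lambda>S. c (insert k S)) z \<noteq> 0"
proof
  define G where "G = mlpoly_on V (\<lambda>S. c (insert k S))"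
  define D where "D = mlpoly_on V c"
  assume "mlpoly_on V (\<lambda>S. c (insert k S)) z = 0"
  then have Gz: "G z = 0" by (simp add: G_def)
  have F_upd: "mlpoly_on (insert k V) c (y(k := w)) = w * G y + D y" for y w
    by (simp add: mlpoly_on_insert[OF V] V(2) G_def D_def)
  have "D z \<noteq> 0"
    using F[of "z(k := 1)"] z V(2) by (auto simp: F_upd Gz)
  text \<open>Moving \<open>z\<close> outwards makes \<open>G\<close> nonzero; then \<open>G\<close> tends to \<open>0\<close> while \<open>D\<close> tends to
    \<open>D z \<noteq> 0\<close>, so the root \<open>-D/G\<close> in the variable \<open>z\<^sub>k\<close> eventually lies outside the unit disc.\<close>
  have "\<forall>i\<in>V. z i \<noteq> 0" using z by force
  with V(1) top obtain X where X: "\<And>i. (\<lambda>m. X m i) \<longlonglongrightarrow> z i" "\<And>m i. norm (z i) \<le> norm (X m i)"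
    and GX: "\<And>m. G (X m) \<noteq> 0"
    unfolding G_def by (rule mlpoly_on_nonzero_sequence) blast
  have "(\<lambda>m. norm (G (X m)) - norm (D (X m))) \<longlonglongrightarrow> norm (G z) - norm (D z)"
    unfolding G_def D_def by (intro tendsto_intros tendsto_mlpoly_on X(1))
  moreover have "norm (G z) - norm (D z) < 0" using Gz \<open>D z \<noteq> 0\<close> by simp
  ultimately obtain m where m: "norm (G (X m)) < norm (D (X m))"
    using order_tendstoD(2)[of _ _ sequentially 0] by (force simp: eventually_sequentially)
  define w where "w = - D (X m) / G (X m)"
  have "1 < norm w"
    using m GX[of m] by (simp add: w_def norm_divide less_divide_eq_1)
  moreover have "1 \<le> norm (X m i)" if "i \<in> V" for i
    using X(2)[of i m] z that by force
  ultimately have "mlpoly_on (insert k V) c ((X m)(k := w)) \<noteq> 0"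
    by (intro F) auto
  then show False
    using GX[of m] by (simp add: F_upd w_def)
qed

lemma mlpoly_on_reflect_torus:
  assumes W: "finite W" and reflect: "\<forall>T\<subseteq>W. c T = d (W - T)"
    and z: "\<forall>i\<in>W. norm (z i) = 1"
  shows "mlpoly_on W c z = (\<Prod>i\<in>W. z i) * cnj (mlpoly_on W d z)"
proof -
  have cnj_z: "cnj (z i) * z i = 1" if "i \<in> W" for i
    using z that complex_norm_square[of "z i"] by (simp add: mult.commute)
  have "(\<Prod>i\<in>W. z i) * cnj (complex_of_real (d S) * (\<Prod>i\<in>S. z i))
      = complex_of_real (d S) * (\<Prod>i\<in>W - S. z i)" if S: "S \<subseteq> W" for S
  proof -
    have "(\<Prod>i\<in>W. z i) = (\<Prod>i\<in>W - S. z i) * (\<Prod>i\<in>S. z i)"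
      using S W by (intro prod.subset_diff) auto
    moreover have "(\<Prod>i\<in>S. cnj (z i)) * (\<Prod>i\<in>S. z i) = 1"
      using S cnj_z by (auto simp: prod.distrib[symmetric] intro: prod.neutral)
    ultimately show ?thesis
      by (simp add: algebra_simps)
  qed
  then have "(\<Prod>i\<in>W. z i) * cnj (mlpoly_on W d z)
      = (\<Sum>S\<in>Pow W. complex_of_real (d S) * (\<Prod>i\<in>W - S. z i))"
    unfolding mlpoly_on_def cnj_sum sum_distrib_left by (intro sum.cong) auto
  also have "\<dots> = (\<Sum>T\<in>Pow W. complex_of_real (d (W - T)) * (\<Prod>i\<in>T. z i))"
    by (rule sum.reindex_bij_witness[where i="\<lambda>T. W - T" and j="\<lambda>S. W - S"])
      (auto simp: double_diff)
  also have "\<dots> = mlpoly_on W c z"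
    unfolding mlpoly_on_def using reflect by (intro sum.cong) auto
  finally show ?thesis ..
qed

lemma norm_mlpoly_on_reflect_torus:
  assumes "finite W" "\<forall>T\<subseteq>W. c T = d (W - T)" "\<forall>i\<in>W. norm (z i) = 1"
  shows "norm (mlpoly_on W c z) = norm (mlpoly_on W d z)"
proof -
  have "norm (\<Prod>i\<in>W. z i) = 1"
    using assms(3) by (simp add: prod_norm[symmetric])
  then show ?thesis
    by (simp add: mlpoly_on_reflect_torus[OF assms] norm_mult)
qed

lemma mlpoly_on_norm_le_release_variable:
  assumes W: "finite W" "k \<in> W" and top: "d W \<noteq> 0"
    and D: "\<And>y. \<forall>i\<in>W. 1 \<le> norm (y i) \<Longrightarrow> mlpoly_on W d y \<noteq> 0"
    and circle: "\<And>w. norm w = 1 \<Longrightarrow>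
      norm (mlpoly_on W c (z(k := w))) \<le> norm (mlpoly_on W d (z(k := w)))"
    and z: "\<forall>i\<in>W. 1 \<le> norm (z i)"
  shows "norm (mlpoly_on W c z) \<le> norm (mlpoly_on W d z)"
proof -
  define V where "V = W - {k}"
  have V: "finite V" "k \<notin> V" and WV: "W = insert k V"
    using W by (auto simp: V_def)
  define a b g e where "a = mlpoly_on V (\<lambda>S. c (insert k S)) z" and "b = mlpoly_on V c z"
    and "g = mlpoly_on V (\<lambda>S. d (insert k S)) z" and "e = mlpoly_on V d z"
  have affine: "mlpoly_on W c (z(k := w)) = a * w + b" "mlpoly_on W d (z(k := w)) = g * w + e" for w
    by (simp_all add: WV mlpoly_on_insert[OF V] V(2) mult.commute a_def b_def g_def e_def)
  have "norm (a * z k + b) \<le> norm (g * z k + e)"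
  proof (rule norm_affine_le_on_exterior)
    show "g \<noteq> 0"
      unfolding g_def
      by (rule mlpoly_on_coeff_nonzero_exterior[OF V]) (use top D z in \<open>auto simp: WV\<close>)
    show "g * w + e \<noteq> 0" if "1 \<le> norm w" for w
      unfolding affine(2)[symmetric] using that z by (intro D) auto
    show "norm (a * w + b) \<le> norm (g * w + e)" if "norm w = 1" for w
      using circle[OF that] by (simp only: affine)
  qed (use z W(2) in auto)
  then show ?thesis
    using affine[of "z k"] by simp
qed

lemma mlpoly_on_norm_le_exterior:
  assumes W: "finite W" and top: "d W \<noteq> 0"
    and D: "\<And>y. \<forall>i\<in>W. 1 \<le> norm (y i) \<Longrightarrow> mlpoly_on W d y \<noteq> 0"
    and torus: "\<And>y. \<forall>i\<in>W. norm (y i) = 1 \<Longrightarrow> norm (mlpoly_on W c y) \<le> norm (mlpoly_on W d y)"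
    and z: "\<forall>i\<in>W. 1 \<le> norm (z i)"
  shows "norm (mlpoly_on W c z) \<le> norm (mlpoly_on W d z)"
proof -
  have "norm (mlpoly_on W c y) \<le> norm (mlpoly_on W d y)"
    if "finite K" "K \<subseteq> W" "\<forall>i\<in>W. 1 \<le> norm (y i)" "\<forall>i\<in>W - K. norm (y i) = 1" for K y
    using that
  proof (induction K arbitrary: y rule: finite_induct)
    case empty
    then show ?case by (intro torus) simp
  next
    case (insert k K)
    show ?case
    proof (rule mlpoly_on_norm_le_release_variable[OF W _ top D])
      fix w :: complex assume "norm w = 1"
      then show "norm (mlpoly_on W c (y(k := w))) \<le> norm (mlpoly_on W d (y(k := w)))"
        using insert.prems by (intro insert.IH) auto
    qed (use insert.prems in auto)
  qed
  then show ?thesis using W z by blast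
qed

lemma complement_coeffs_reflect:
  assumes "\<forall>S \<subseteq> {..<n}. p S = p ({..<n} - S)" "j < n"
  shows "\<forall>T \<subseteq> {..<n} - {j}. p T = p (insert j ({..<n} - {j} - T))"
proof (intro allI impI)
  fix T assume T: "T \<subseteq> {..<n} - {j}"
  then have "p T = p ({..<n} - T)"
    using assms(1) by blast
  moreover have "{..<n} - T = insert j ({..<n} - {j} - T)"
    using assms(2) T by auto
  ultimately show "p T = p (insert j ({..<n} - {j} - T))"
    by simp
qed

lemma affine_nonzero_if_norm_le:
  fixes a b w :: "'a :: real_normed_div_algebra"
  assumes "norm b \<le> norm a" "a \<noteq> 0" "1 < norm w"
  shows "w * a + b \<noteq> 0"
proof
  assume "w * a + b = 0"
  then have "norm w * norm a = norm b"
    by (metis add_eq_0_iff norm_minus_cancel norm_mult)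
  moreover have "1 * norm a < norm w * norm a"
    using assms(2,3) by (intro mult_strict_right_mono) auto
  ultimately show False using assms(1) by simp
qed

theorem lemma4p7:
  fixes n :: nat and p :: "nat set \<Rightarrow> real"
  assumes nonzero: "\<forall>S \<subseteq> {..<n}. p S \<noteq> 0"
    and symm: "\<forall>S \<subseteq> {..<n}. p S = p ({..<n} - S)"
    and A_nonzero: "\<forall>j<n. \<forall>z. (\<forall>i<n. i \<noteq> j \<longrightarrow> 1 \<le> norm (z i)) \<longrightarrow> mlcoeffA n p j z \<noteq> 0"
  shows "lee_yang n (mlpoly n p)"
  unfolding lee_yang_def mlpoly_eq_mlpoly_on
proof (intro allI impI)
  fix z :: "nat \<Rightarrow> complex"
  assume z: "(\<forall>i<n. 1 \<le> norm (z i)) \<and> (\<exists>i<n. 1 < norm (z i))"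
  then obtain j where j: "j < n" "1 < norm (z j)" by blast
  define W where "W = {..<n} - {j}"
  have W: "finite W" "j \<notin> W" "{..<n} = insert j W" and z_W: "\<forall>i\<in>W. 1 \<le> norm (z i)"
    using j z by (auto simp: W_def)
  have A_ext: "mlpoly_on W (\<lambda>S. p (insert j S)) y \<noteq> 0" if "\<forall>i\<in>W. 1 \<le> norm (y i)" for y
    using A_nonzero j that by (auto simp: W_def mlcoeffA_eq_mlpoly_on)
  have "norm (mlpoly_on W p z) \<le> norm (mlpoly_on W (\<lambda>S. p (insert j S)) z)"
  proof (rule mlpoly_on_norm_le_exterior[OF W(1) _ A_ext _ z_W])
    show "p (insert j W) \<noteq> 0" using nonzero W(3) by auto
    show "norm (mlpoly_on W p y) \<le> norm (mlpoly_on W (\<lambda>S. p (insert j S)) y)"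
      if "\<forall>i\<in>W. norm (y i) = 1" for y
      using norm_mlpoly_on_reflect_torus[OF W(1) _ that, of p "\<lambda>S. p (insert j S)"]
        complement_coeffs_reflect[OF symm j(1)]
      unfolding W_def by simp
  qed
  then show "mlpoly_on {..<n} p z \<noteq> 0"
    unfolding W(3) mlpoly_on_insert[OF W(1,2)]
    by (rule affine_nonzero_if_norm_le) (use A_ext[OF z_W] j(2) in auto)
qed

end
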